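(* In a positive, anchored hidden Markov model with any (measurable) policy $g$, there exists a constant $0<\lambda<1$ such that for all $Z\in\mathcal P(\mathcal P(S))$ and all $t\ge0$, $F^t(Z)(R^c)\le\lambda^t$.
   Context: Model: $(X_t)$ is a time-homogeneous Markov chain on $S=\{1,\dots,n\}$ with transition matrix $T$; $O$ is a finite index set of observation processes $Y^{(i)}_t$ with values in $V=\{1,\dots,m\}$ and observation matrices $M^{(i)}$, $M^{(i)}_{jk}=\mathbb P(Y^{(i)}_t=k\mid X_t=j)$. $\mathcal P(S)$ is the probability simplex in $\mathbb R^n$, $\delta(x)$ the point mass at $x\in S$, $\mathcal P(\mathcal P(S))$ the Radon probability measures on $\mathcal P(S)$. A policy is a function $g:\mathcal P(S)\to O$, $A_i=g^{-1}\{i\}$ (the observation process used at time $t+1$ is $g$ of the current information state, i.e. the posterior distribution of $X_t$). For $i\in O$, $y\in V$: $\alpha_{i,y}(z)=(zTM^{(i)})_y=\sum_{j,x}z_jT_{j,x}M^{(i)}_{x,y}$, and when $\alpha_{i,y}(z)>0$, $r_{i,y}(z)=\frac{\sum_{x,j}M^{(i)}_{x,y}T_{j,x}z_j\delta(x)}{\sum_{x,j}M^{(i)}_{x,y}T_{j,x}z_j}$. The transition function $F:\mathcal P(\mathcal P(S))\to\mathcal P(\mathcal P(S))$ is $F(\mu)=\sum_{i\in O}\sum_{y\in V}\int_{A_i}\alpha_{i,y}(z)\delta_{r_{i,y}(z)}\,d\mu(z)$ (terms with $\alpha_{i,y}(z)=0$ are zero). Positive: all entries of $T$ are strictly positive.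 Anchored: $(X_t)$ is ergodic and for each $i\in O$ there are $x_i\in S$, $y_i\in V$ with $M^{(i)}_{x_i,y_i}>0$ and $M^{(i)}_{x,y_i}=0$ for $x\ne x_i$. Orbit $R_x$: $\delta(x)$ together with all points $r_{i_k,y_k}\circ\cdots\circ r_{i_1,y_1}(\delta(x))$ ($k\ge1$, arbitrary $i_j\in O$, $y_j\in V$) such that each $\alpha_{i_{j+1},y_{j+1}}$ evaluated at the preceding point is positive. $R=\bigcup_{x\in S}R_x$, and $R^c$ is its complement in $\mathcal P(S)$. *)

theory Defs
  imports "HOL-Probability.Probability"
begin

text \<open>States: finite type 's (S = {1..n}); observation values: finite type 'v (V = {1..m});
  observation-process indices: finite type 'o (O).
  Transition matrix T :: 's => 's => real (T j x = T_{j,x});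
  observation matrices M :: 'o => 's => 'v => real (M i x y = M^(i)_{x,y}).
  Points of P(S) are vectors z :: real^'s.\<close>

definition stochastic_matrix :: "('a::finite \<Rightarrow> 'b::finite \<Rightarrow> real) \<Rightarrow> bool" where
  "stochastic_matrix A \<longleftrightarrow> (\<forall>j k. A j k \<ge> 0) \<and> (\<forall>j. (\<Sum>k\<in>UNIV. A j k) = 1)"

definition prob_simplex :: "(real^'s::finite) set" where
  "prob_simplex = {z. (\<forall>j. z $ j \<ge> 0) \<and> (\<Sum>j\<in>UNIV. z $ j) = 1}"

definition point_mass :: "'s::finite \<Rightarrow> real^'s" where
  "point_mass x = (\<chi> j. if j = x then 1 else 0)"

fun mpow :: "('s::finite \<Rightarrow> 's \<Rightarrow> real) \<Rightarrow> nat \<Rightarrow> 's \<Rightarrow> 's \<Rightarrow> real" where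
  "mpow T 0 = (\<lambda>j x. if j = x then 1 else 0)"
| "mpow T (Suc k) = (\<lambda>j x. \<Sum>y\<in>UNIV. mpow T k j y * T y x)"

definition irreducible_chain :: "('s::finite \<Rightarrow> 's \<Rightarrow> real) \<Rightarrow> bool" where
  "irreducible_chain T \<longleftrightarrow> (\<forall>j x. \<exists>k. mpow T k j x > 0)"

definition aperiodic_chain :: "('s::finite \<Rightarrow> 's \<Rightarrow> real) \<Rightarrow> bool" where
  "aperiodic_chain T \<longleftrightarrow> (\<forall>j. Gcd {k. 0 < k \<and> mpow T k j j > 0} = (1::nat))"

definition ergodic_chain :: "('s::finite \<Rightarrow> 's \<Rightarrow> real) \<Rightarrow> bool" where
  "ergodic_chain T \<longleftrightarrow> irreducible_chain T \<and> aperiodic_chain T"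

definition positive_hmm :: "('s::finite \<Rightarrow> 's \<Rightarrow> real) \<Rightarrow> bool" where
  "positive_hmm T \<longleftrightarrow> (\<forall>j x. T j x > 0)"

definition anchored_hmm :: "('s::finite \<Rightarrow> 's \<Rightarrow> real) \<Rightarrow> ('o::finite \<Rightarrow> 's \<Rightarrow> 'v::finite \<Rightarrow> real) \<Rightarrow> bool" where
  "anchored_hmm T M \<longleftrightarrow> ergodic_chain T \<and>
     (\<forall>i. \<exists>xi yi. M i xi yi > 0 \<and> (\<forall>x. x \<noteq> xi \<longrightarrow> M i x yi = 0))"

definition alpha :: "('s::finite \<Rightarrow> 's \<Rightarrow> real) \<Rightarrow> ('o \<Rightarrow> 's \<Rightarrow> 'v \<Rightarrow> real) \<Rightarrow> 'o \<Rightarrow> 'v \<Rightarrow> real^'s \<Rightarrow> real" where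
  "alpha T M i y z = (\<Sum>j\<in>UNIV. \<Sum>x\<in>UNIV. z $ j * T j x * M i x y)"

definition rupd :: "('s::finite \<Rightarrow> 's \<Rightarrow> real) \<Rightarrow> ('o \<Rightarrow> 's \<Rightarrow> 'v \<Rightarrow> real) \<Rightarrow> 'o \<Rightarrow> 'v \<Rightarrow> real^'s \<Rightarrow> real^'s" where
  "rupd T M i y z = (\<chi> x. (\<Sum>j\<in>UNIV. M i x y * T j x * z $ j) / alpha T M i y z)"

definition PS_space :: "(real^'s::finite) measure" where
  "PS_space = restrict_space borel prob_simplex"

text \<open>Probability measures on P(S) (Radon, as finite Borel measures on a compact metric space).\<close>
definition prob_on_PS :: "(real^'s::finite) measure \<Rightarrow> bool" where
  "prob_on_PS Z \<longleftrightarrow> prob_space Z \<and> sets Z = sets PS_space"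

text \<open>The transition function F on P(P(S)) for the policy g (A_i = g^{-1}{i}):
  F(mu)(B) = sum_i sum_y int_{A_i} alpha_{i,y}(z) * 1_B(r_{i,y}(z)) dmu(z);
  terms with alpha_{i,y}(z) = 0 vanish.\<close>
definition transF :: "('s::finite \<Rightarrow> 's \<Rightarrow> real) \<Rightarrow> ('o::finite \<Rightarrow> 's \<Rightarrow> 'v::finite \<Rightarrow> real)
    \<Rightarrow> (real^'s \<Rightarrow> 'o) \<Rightarrow> (real^'s) measure \<Rightarrow> (real^'s) measure" where
  "transF T M g \<mu> = measure_of prob_simplex (sets PS_space)
     (\<lambda>B. \<integral>\<^sup>+ z. ennreal (\<Sum>i\<in>UNIV. \<Sum>y\<in>UNIV.
            (if g z = i \<and> alpha T M i y z > 0 then alpha T M i y z * indicator B (rupd T M i y z) else 0)) \<partial>\<mu>)"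

inductive_set orbit :: "('s::finite \<Rightarrow> 's \<Rightarrow> real) \<Rightarrow> ('o \<Rightarrow> 's \<Rightarrow> 'v \<Rightarrow> real) \<Rightarrow> 's \<Rightarrow> (real^'s) set"
  for T M x where
  base: "point_mass x \<in> orbit T M x"
| step: "z \<in> orbit T M x \<Longrightarrow> alpha T M i y z > 0 \<Longrightarrow> rupd T M i y z \<in> orbit T M x"

definition orbit_union :: "('s::finite \<Rightarrow> 's \<Rightarrow> real) \<Rightarrow> ('o \<Rightarrow> 's \<Rightarrow> 'v \<Rightarrow> real) \<Rightarrow> (real^'s) set" where
  "orbit_union T M = (\<Union>x. orbit T M x)"

end

theory Submission
  imports Defs
begin

text \<open>For every observation process i the anchor observation yi is emitted only from the state xi,
  and the information state after observing it is the point mass at xi, which lies in the orbit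
  union R. Positivity of T bounds the probability of that observation below by a uniform c > 0,
  whatever the current information state. Since one update step never leaves R, the mass of the
  complement of R is multiplied by at most 1 - c in each step of F.\<close>

lemma continuous_on_alpha: "continuous_on UNIV (alpha T M i y)"
  unfolding alpha_def by (intro continuous_intros)

lemma borel_measurable_alpha: "alpha T M i y \<in> borel_measurable borel"
  by (rule borel_measurable_continuous_onI[OF continuous_on_alpha])

lemma borel_measurable_rupd: "rupd T M i y \<in> borel_measurable borel"
proof -
  have component: "(\<lambda>z. rupd T M i y z $ k) \<in> borel_measurable borel" for k
  proof -
    have "continuous_on UNIV (\<lambda>z::real^'a. \<Sum>j\<in>UNIV. M i k y * T j k * z $ j)"
      by (intro continuous_intros)
    then show ?thesis
      unfolding rupd_def vec_lambda_beta
      by (intro borel_measurable_divide borel_measurable_continuous_onI borel_measurable_alpha)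
  qed
  show ?thesis
  proof (subst borel_measurable_euclidean_space, intro ballI)
    fix b :: "real^'a" assume "b \<in> Basis"
    then obtain k where "b = axis k 1" by (auto simp: Basis_vec_def)
    then show "(\<lambda>z. rupd T M i y z \<bullet> b) \<in> borel_measurable borel"
      using component[of k] by (simp add: inner_axis)
  qed
qed

lemma closed_prob_simplex: "closed (prob_simplex :: (real^'s::finite) set)"
proof -
  have "prob_simplex = (\<Inter>j. {z::real^'s. z $ j \<ge> 0}) \<inter> {z. (\<Sum>j\<in>UNIV. z $ j) = 1}"
    unfolding prob_simplex_def by auto
  moreover have "closed {z::real^'s. (\<Sum>j\<in>UNIV. z $ j) = 1}"
    by (intro closed_Collect_eq continuous_intros)
  moreover have "closed {z::real^'s. z $ j \<ge> 0}" for j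
    by (intro closed_Collect_le continuous_intros)
  ultimately show ?thesis by (metis closed_Int closed_INT)
qed

lemma space_PS_space: "space PS_space = prob_simplex"
  unfolding PS_space_def by (simp add: space_restrict_space)

lemma sets_PS_space_imp_borel: "B \<in> sets PS_space \<Longrightarrow> B \<in> sets borel"
  unfolding PS_space_def
  using sets_restrict_space_iff[of prob_simplex borel B] borel_closed[OF closed_prob_simplex]
  by auto

lemma alpha_nonneg:
  assumes "stochastic_matrix T" "stochastic_matrix (M i)" "z \<in> prob_simplex"
  shows "0 \<le> alpha T M i y z"
  using assms unfolding alpha_def stochastic_matrix_def prob_simplex_def
  by (intro sum_nonneg mult_nonneg_nonneg) auto

lemma sum_alpha_eq_1:
  assumes "stochastic_matrix T" "stochastic_matrix (M i)" "z \<in> prob_simplex"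
  shows "(\<Sum>y\<in>UNIV. alpha T M i y z) = 1"
proof -
  have "(\<Sum>y\<in>UNIV. alpha T M i y z) = (\<Sum>j\<in>UNIV. \<Sum>x\<in>UNIV. \<Sum>y\<in>UNIV. z $ j * T j x * M i x y)"
    unfolding alpha_def by (subst sum.swap) (intro sum.cong refl sum.swap)
  also have "\<dots> = (\<Sum>j\<in>UNIV. z $ j * (\<Sum>x\<in>UNIV. T j x))"
    using assms(2) by (simp add: stochastic_matrix_def flip: sum_distrib_left)
  also have "\<dots> = 1"
    using assms(1,3) by (simp add: stochastic_matrix_def prob_simplex_def)
  finally show ?thesis .
qed

lemma alpha_anchor:
  assumes "\<And>x. x \<noteq> a \<Longrightarrow> M i x y = 0"
  shows "alpha T M i y z = (\<Sum>j\<in>UNIV. z $ j * (T j a * M i a y))"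
proof -
  have "(\<Sum>x\<in>UNIV. z $ j * T j x * M i x y) = z $ j * (T j a * M i a y)" for j
    by (subst sum.remove[of _ a]) (auto simp: assms)
  then show ?thesis unfolding alpha_def by simp
qed

lemma alpha_anchor_ge:
  assumes "\<And>x. x \<noteq> a \<Longrightarrow> M i x y = 0" and "z \<in> prob_simplex"
    and "\<And>j. c \<le> T j a * M i a y"
  shows "c \<le> alpha T M i y z"
proof -
  have "c = (\<Sum>j\<in>UNIV. z $ j * c)"
    using assms(2) by (simp add: prob_simplex_def flip: sum_distrib_right)
  also have "\<dots> \<le> (\<Sum>j\<in>UNIV. z $ j * (T j a * M i a y))"
    using assms(2,3) by (intro sum_mono mult_left_mono) (auto simp: prob_simplex_def)
  finally show ?thesis using alpha_anchor[of a M i y T z, OF assms(1)] by simp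
qed

lemma rupd_anchor:
  assumes "\<And>x. x \<noteq> a \<Longrightarrow> M i x y = 0" and "alpha T M i y z > 0"
  shows "rupd T M i y z = point_mass a"
proof -
  have "(\<Sum>j\<in>UNIV. M i a y * T j a * z $ j) = alpha T M i y z"
    using alpha_anchor[of a M i y T z, OF assms(1)] by (simp add: algebra_simps)
  then show ?thesis
    using assms unfolding rupd_def point_mass_def by (auto simp: vec_eq_iff)
qed

lemma point_mass_in_orbit_union: "point_mass x \<in> orbit_union T M"
  unfolding orbit_union_def by (auto intro: orbit.base)

lemma rupd_in_orbit_union:
  "z \<in> orbit_union T M \<Longrightarrow> alpha T M i y z > 0 \<Longrightarrow> rupd T M i y z \<in> orbit_union T M"
  unfolding orbit_union_def by (auto intro: orbit.step)

definition obs_weight :: "('s::finite \<Rightarrow> 's \<Rightarrow> real) \<Rightarrow> ('o \<Rightarrow> 's \<Rightarrow> 'v \<Rightarrow> real)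
    \<Rightarrow> (real^'s \<Rightarrow> 'o) \<Rightarrow> 'o \<Rightarrow> 'v \<Rightarrow> real^'s \<Rightarrow> real" where
  "obs_weight T M g i y z = (if g z = i \<and> alpha T M i y z > 0 then alpha T M i y z else 0)"

definition transF_kernel :: "('s::finite \<Rightarrow> 's \<Rightarrow> real) \<Rightarrow> ('o::finite \<Rightarrow> 's \<Rightarrow> 'v::finite \<Rightarrow> real)
    \<Rightarrow> (real^'s \<Rightarrow> 'o) \<Rightarrow> (real^'s) set \<Rightarrow> real^'s \<Rightarrow> ennreal" where
  "transF_kernel T M g B z =
     (\<Sum>i\<in>UNIV. \<Sum>y\<in>UNIV. ennreal (obs_weight T M g i y z) * indicator B (rupd T M i y z))"

lemma obs_weight_nonneg: "0 \<le> obs_weight T M g i y z"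
  unfolding obs_weight_def by auto

lemma obs_weight_le_alpha: "0 \<le> alpha T M i y z \<Longrightarrow> obs_weight T M g i y z \<le> alpha T M i y z"
  unfolding obs_weight_def by auto

lemma sum_obs_weight_policy:
  fixes g :: "real^'s::finite \<Rightarrow> 'o::finite"
  shows "(\<Sum>i\<in>UNIV. \<Sum>y\<in>UNIV. obs_weight T M g i y z * f i y) =
   (\<Sum>y\<in>UNIV. obs_weight T M g (g z) y z * f (g z) y)"
  by (subst sum.remove[of UNIV "g z"]) (auto simp: obs_weight_def)

lemma transF_kernel_eq_ennreal:
  "transF_kernel T M g B z =
   ennreal (\<Sum>i\<in>UNIV. \<Sum>y\<in>UNIV. obs_weight T M g i y z * indicator B (rupd T M i y z))"
  unfolding transF_kernel_def
  by (simp add: obs_weight_nonneg sum_nonneg ennreal_mult' ennreal_indicator flip: sum_ennreal)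

lemma transF_eq_measure_of:
  "transF T M g \<mu> = measure_of (space PS_space) (sets PS_space) (\<lambda>B. \<integral>\<^sup>+ z. transF_kernel T M g B z \<partial>\<mu>)"
proof -
  have "(\<Sum>i\<in>UNIV. \<Sum>y\<in>UNIV. if g z = i \<and> alpha T M i y z > 0
           then alpha T M i y z * indicator B (rupd T M i y z) else 0)
      = (\<Sum>i\<in>UNIV. \<Sum>y\<in>UNIV. obs_weight T M g i y z * indicator B (rupd T M i y z))" for B z
    unfolding obs_weight_def by (intro sum.cong refl) auto
  then show ?thesis
    unfolding transF_def space_PS_space transF_kernel_eq_ennreal by simp
qed

lemma sets_transF: "sets (transF T M g \<mu>) = sets PS_space"
  unfolding transF_eq_measure_of by simp

lemma borel_measurable_transF_kernel:
  assumes g: "g \<in> PS_space \<rightarrow>\<^sub>M count_space UNIV" and B: "B \<in> sets PS_space"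
  shows "transF_kernel T M g B \<in> borel_measurable PS_space"
proof -
  have "alpha T M i y \<in> borel_measurable PS_space" for i y
    unfolding PS_space_def by (rule measurable_restrict_space1[OF borel_measurable_alpha])
  moreover have "Measurable.pred PS_space (\<lambda>z. g z = i)" for i
    by (rule pred_count_space_const1[OF g])
  ultimately have "obs_weight T M g i y \<in> borel_measurable PS_space" for i y
    unfolding obs_weight_def[abs_def] by measurable
  moreover have "(\<lambda>z. indicator B (rupd T M i y z) :: ennreal) \<in> borel_measurable PS_space" for i y
    using measurable_compose[OF measurable_restrict_space1[OF borel_measurable_rupd]
        borel_measurable_indicator[OF sets_PS_space_imp_borel[OF B]]]
    by (simp add: comp_def PS_space_def)
  ultimately show ?thesis
    unfolding transF_kernel_def[abs_def] by measurable
qed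

lemma suminf_transF_kernel:
  assumes "disjoint_family A"
  shows "(\<Sum>n. transF_kernel T M g (A n) z) = transF_kernel T M g (\<Union>n. A n) z"
proof -
  have "(\<Sum>n. transF_kernel T M g (A n) z) =
        (\<Sum>i\<in>UNIV. \<Sum>y\<in>UNIV. \<Sum>n. ennreal (obs_weight T M g i y z) * indicator (A n) (rupd T M i y z))"
    unfolding transF_kernel_def by (simp only: suminf_sum summableI)
  then show ?thesis
    unfolding transF_kernel_def ennreal_suminf_cmult suminf_indicator[OF assms] .
qed

lemma emeasure_transF:
  fixes \<mu> :: "(real^'s::finite) measure"
  assumes g: "g \<in> PS_space \<rightarrow>\<^sub>M count_space UNIV" and \<mu>: "sets \<mu> = sets PS_space"
    and B: "B \<in> sets PS_space"
  shows "emeasure (transF T M g \<mu>) B = (\<integral>\<^sup>+ z. transF_kernel T M g B z \<partial>\<mu>)"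
proof -
  define \<nu> where "\<nu> B = (\<integral>\<^sup>+ z. transF_kernel T M g B z \<partial>\<mu>)" for B
  have "countably_additive (sets PS_space) \<nu>"
  proof (unfold countably_additive_def, intro allI impI)
    fix A :: "nat \<Rightarrow> (real^'s) set" assume A: "range A \<subseteq> sets PS_space" "disjoint_family A"
    have "(\<Sum>n. \<nu> (A n)) = (\<integral>\<^sup>+ z. (\<Sum>n. transF_kernel T M g (A n) z) \<partial>\<mu>)"
      unfolding \<nu>_def using A(1) borel_measurable_transF_kernel[OF g]
      by (intro nn_integral_suminf[symmetric]) (auto simp: measurable_cong_sets[OF \<mu> refl])
    then show "(\<Sum>n. \<nu> (A n)) = \<nu> (\<Union> (range A))"
      unfolding suminf_transF_kernel[OF A(2)] \<nu>_def .
  qed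
  moreover have "positive (sets PS_space) \<nu>"
    unfolding positive_def \<nu>_def transF_kernel_def by simp
  ultimately show ?thesis
    using emeasure_measure_of_sigma[OF sets.sigma_algebra_axioms _ _ B]
    unfolding transF_eq_measure_of \<nu>_def by blast
qed

lemma transF_kernel_orbit_complement_le:
  fixes T :: "'s::finite \<Rightarrow> 's \<Rightarrow> real" and M :: "'o::finite \<Rightarrow> 's \<Rightarrow> 'v::finite \<Rightarrow> real"
  assumes T: "stochastic_matrix T" and M: "\<And>i. stochastic_matrix (M i)"
    and anchor: "\<And>i x. x \<noteq> xi i \<Longrightarrow> M i x (yi i) = 0"
    and c: "\<And>i j. c \<le> T j (xi i) * M i (xi i) (yi i)"
    and z: "z \<in> prob_simplex"
  defines "N \<equiv> prob_simplex - orbit_union T M"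
  shows "(\<Sum>i\<in>UNIV. \<Sum>y\<in>UNIV. obs_weight T M g i y z * indicator N (rupd T M i y z))
           \<le> (1 - c) * indicator N z"
proof -
  define summand
    where "summand y = obs_weight T M g (g z) y z * indicator N (rupd T M (g z) y z)" for y
  have policy: "(\<Sum>i\<in>UNIV. \<Sum>y\<in>UNIV. obs_weight T M g i y z * indicator N (rupd T M i y z))
      = (\<Sum>y\<in>UNIV. summand y)"
    unfolding summand_def
    by (rule sum_obs_weight_policy[where f = "\<lambda>i y. indicator N (rupd T M i y z)"])
  show ?thesis
  proof (cases "z \<in> orbit_union T M")
    case True
    then have "summand y = 0" for y
      using rupd_in_orbit_union[of z T M "g z" y] unfolding summand_def obs_weight_def N_def by auto
    then show ?thesis using True unfolding policy by (simp add: N_def)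
  next
    case False
    let ?a = "\<lambda>y. alpha T M (g z) y z"
    have "summand (yi (g z)) = 0"
      using rupd_anchor[of "xi (g z)" M "g z" "yi (g z)" T z] anchor
        point_mass_in_orbit_union[of "xi (g z)" T M]
      unfolding summand_def obs_weight_def N_def by auto
    then have "(\<Sum>y\<in>UNIV. summand y) = (\<Sum>y\<in>UNIV - {yi (g z)}. summand y)"
      by (simp add: sum.remove[of UNIV "yi (g z)"])
    also have "\<dots> \<le> (\<Sum>y\<in>UNIV - {yi (g z)}. ?a y)"
    proof (rule sum_mono)
      fix y
      have "summand y \<le> obs_weight T M g (g z) y z"
        unfolding summand_def by (simp add: indicator_def obs_weight_nonneg)
      also have "\<dots> \<le> ?a y"
        by (rule obs_weight_le_alpha[OF alpha_nonneg[where M = M and i = "g z", OF T M z]])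
      finally show "summand y \<le> ?a y" .
    qed
    also have "\<dots> = 1 - ?a (yi (g z))"
      using sum.remove[of UNIV "yi (g z)" ?a] sum_alpha_eq_1[where M = M and i = "g z", OF T M z]
      by simp
    also have "\<dots> \<le> 1 - c"
    proof -
      have "c \<le> ?a (yi (g z))"
        by (rule alpha_anchor_ge[where a = "xi (g z)"]) (use anchor z c in auto)
      then show ?thesis by simp
    qed
    finally show ?thesis using False z unfolding policy by (simp add: N_def)
  qed
qed

lemma emeasure_transF_orbit_complement_le:
  fixes T :: "'s::finite \<Rightarrow> 's \<Rightarrow> real" and M :: "'o::finite \<Rightarrow> 's \<Rightarrow> 'v::finite \<Rightarrow> real"
  assumes T: "stochastic_matrix T" and M: "\<And>i. stochastic_matrix (M i)"
    and anchor: "\<And>i x. x \<noteq> xi i \<Longrightarrow> M i x (yi i) = 0"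
    and c: "\<And>i j. c \<le> T j (xi i) * M i (xi i) (yi i)"
    and g: "g \<in> PS_space \<rightarrow>\<^sub>M count_space UNIV" and \<mu>: "sets \<mu> = sets PS_space"
  defines "N \<equiv> prob_simplex - orbit_union T M"
  shows "emeasure (transF T M g \<mu>) N \<le> ennreal (1 - c) * emeasure \<mu> N"
proof (cases "N \<in> sets PS_space")
  case False
  then show ?thesis by (simp add: emeasure_notin_sets sets_transF)
next
  case True
  have "emeasure (transF T M g \<mu>) N = (\<integral>\<^sup>+ z. transF_kernel T M g N z \<partial>\<mu>)"
    by (rule emeasure_transF[OF g \<mu> True])
  also have "\<dots> \<le> (\<integral>\<^sup>+ z. ennreal (1 - c) * indicator N z \<partial>\<mu>)"
  proof (rule nn_integral_mono)
    fix z assume "z \<in> space \<mu>"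
    then have "z \<in> prob_simplex"
      using sets_eq_imp_space_eq[OF \<mu>] space_PS_space by auto
    then have "transF_kernel T M g N z \<le> ennreal ((1 - c) * indicator N z)"
      unfolding transF_kernel_eq_ennreal N_def
      by (intro ennreal_leI transF_kernel_orbit_complement_le[OF T M anchor c])
    then show "transF_kernel T M g N z \<le> ennreal (1 - c) * indicator N z"
      by (cases "z \<in> N") auto
  qed
  also have "\<dots> = ennreal (1 - c) * emeasure \<mu> N"
    using True \<mu> by (intro nn_integral_cmult_indicator) simp
  finally show ?thesis .
qed

lemma emeasure_funpow_le_power:
  assumes closed: "\<And>\<mu>. P \<mu> \<Longrightarrow> P (F \<mu>)"
    and contract: "\<And>\<mu>. P \<mu> \<Longrightarrow> emeasure (F \<mu>) N \<le> c * emeasure \<mu> N"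
    and "P Z"
  shows "emeasure ((F ^^ t) Z) N \<le> c ^ t * emeasure Z N"
proof (induction t)
  case (Suc t)
  have "P ((F ^^ t) Z)"
    using \<open>P Z\<close> by (induction t) (auto intro: closed)
  then have "emeasure ((F ^^ Suc t) Z) N \<le> c * emeasure ((F ^^ t) Z) N"
    by (simp add: contract)
  also have "\<dots> \<le> c * (c ^ t * emeasure Z N)"
    using Suc.IH by (rule mult_left_mono) simp
  finally show ?case by (simp add: mult.assoc)
qed simp

lemma positive_anchored_uniform_bound:
  assumes "positive_hmm T" and "anchored_hmm T M"
  obtains xi yi and c :: real
  where "\<And>i x. x \<noteq> xi i \<Longrightarrow> M i x (yi i) = 0"
    and "0 < c" "c \<le> 1/2" "\<And>i j. c \<le> T j (xi i) * M i (xi i) (yi i)"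
proof -
  obtain xi yi where anchor: "\<And>i. M i (xi i) (yi i) > 0 \<and> (\<forall>x. x \<noteq> xi i \<longrightarrow> M i x (yi i) = 0)"
    using assms(2) unfolding anchored_hmm_def by metis
  define C where "C = (\<lambda>(i, j). T j (xi i) * M i (xi i) (yi i)) ` UNIV"
  have "finite C" "C \<noteq> {}" "\<forall>a\<in>C. 0 < a"
    using anchor assms(1) unfolding C_def positive_hmm_def by auto
  then have "0 < min (1/2) (Min C)" "min (1/2) (Min C) \<le> T j (xi i) * M i (xi i) (yi i)" for i j
    by (auto simp: C_def intro!: min.coboundedI2 Min_le)
  then show ?thesis
    using that[of xi yi "min (1/2) (Min C)"] anchor by auto
qed

theorem proposition2p21:
  fixes T :: "'s::finite \<Rightarrow> 's \<Rightarrow> real"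
    and M :: "'o::finite \<Rightarrow> 's \<Rightarrow> 'v::finite \<Rightarrow> real"
    and g :: "real^'s \<Rightarrow> 'o"
  assumes "stochastic_matrix T"
    and "\<And>i. stochastic_matrix (M i)"
    and "positive_hmm T"
    and "anchored_hmm T M"
    and "g \<in> PS_space \<rightarrow>\<^sub>M count_space UNIV"
  shows "\<exists>lam::real. 0 < lam \<and> lam < 1 \<and>
    (\<forall>Z t. prob_on_PS Z \<longrightarrow>
       measure ((transF T M g ^^ t) Z) (prob_simplex - orbit_union T M) \<le> lam ^ t)"
proof -
  obtain xi yi and c :: real
    where anchor: "\<And>i x. x \<noteq> xi i \<Longrightarrow> M i x (yi i) = 0"
      and c: "0 < c" "c \<le> 1/2" "\<And>i j. c \<le> T j (xi i) * M i (xi i) (yi i)"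
    using positive_anchored_uniform_bound[OF assms(3,4)] by blast
  let ?N = "prob_simplex - orbit_union T M"
  have contract: "emeasure (transF T M g \<mu>) ?N \<le> ennreal (1 - c) * emeasure \<mu> ?N"
    if "sets \<mu> = sets PS_space" for \<mu>
    by (rule emeasure_transF_orbit_complement_le[where xi = xi and yi = yi])
       (use assms anchor c that in auto)
  have "measure ((transF T M g ^^ t) Z) ?N \<le> (1 - c) ^ t" if Z: "prob_on_PS Z" for Z t
  proof -
    have "emeasure ((transF T M g ^^ t) Z) ?N \<le> ennreal (1 - c) ^ t * emeasure Z ?N"
      by (rule emeasure_funpow_le_power[where P = "\<lambda>\<mu>. sets \<mu> = sets PS_space", OF _ contract])
         (use Z in \<open>auto simp: sets_transF prob_on_PS_def\<close>)
    also have "\<dots> \<le> ennreal ((1 - c) ^ t)"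
      using Z prob_space.emeasure_le_1[of Z ?N] c(2)
      by (simp add: prob_on_PS_def ennreal_power mult_left_le)
    finally show ?thesis
      using c(2) by (simp add: measure_def enn2real_leI)
  qed
  then show ?thesis
    using c(1,2) by (intro exI[of _ "1 - c"]) auto
qed

end
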